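(* Let $\mathcal A$ be an arrangement of $n$ affine lines in $\mathbb C^2$ whose graph of double points $\Gamma$ is connected, and let $\widetilde{\mathcal A}=c\mathcal A$ be its cone. Then the resonance variety $\mathcal R^1(\widetilde{\mathcal A})$ has no global component.
   Context: The graph of double points $\Gamma$ of $\mathcal A$ has vertex set $\mathcal A$, with an edge $\{\ell_i,\ell_j\}$ iff $\ell_i\cap\ell_j$ is a point lying on no other line of $\mathcal A$. The cone $c\mathcal A=\{\widetilde H_0,\dots,\widetilde H_n\}$ is the central arrangement in $\mathbb C^3$ consisting of $z_0=0$ and the homogenizations of the lines of $\mathcal A$. Let $A^\bullet$ be the Orlik–Solomon algebra of $\widetilde{\mathcal A}$ over $\mathbb C$, with $A^1$ having the standard basis $e_0,\dots,e_n$ corresponding to the hyperplanes. The resonance variety is $\mathcal R^1(\widetilde{\mathcal A})=\{a\in A^1: H^1(A^\bullet,a\wedge\cdot)\ne 0\}$; it is a finite union of linear subspaces (its components). A component is called global if it is not contained in any coordinate hyperplane of $A^1$ (with respect to the basis $e_0,\dots,e_n$). *)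

theory Defs
  imports Complex_Main
begin

(* An affine line arrangement in C^2 with lines indexed by a finite type 'l.
   Line i is given by  L i = (a, b, c)  and is the zero set of a*x + b*y + c. *)

definition line_pts :: "('l \<Rightarrow> complex \<times> complex \<times> complex) \<Rightarrow> 'l \<Rightarrow> (complex \<times> complex) set" where
  "line_pts L i = (case L i of (a, b, c) \<Rightarrow> {(x, y). a * x + b * y + c = 0})"

definition affine_line_arrangement :: "('l \<Rightarrow> complex \<times> complex \<times> complex) \<Rightarrow> bool" where
  "affine_line_arrangement L \<longleftrightarrow>
     (\<forall>i. case L i of (a, b, c) \<Rightarrow> (a, b) \<noteq> (0, 0)) \<and> inj (line_pts L)"

definition double_point_edge :: "('l \<Rightarrow> complex \<times> complex \<times> complex) \<Rightarrow> 'l \<Rightarrow> 'l \<Rightarrow> bool" where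
  "double_point_edge L i j \<longleftrightarrow> i \<noteq> j \<and>
     (\<exists>p. line_pts L i \<inter> line_pts L j = {p} \<and>
          (\<forall>k. k \<noteq> i \<longrightarrow> k \<noteq> j \<longrightarrow> p \<notin> line_pts L k))"

definition double_point_graph_connected :: "('l \<Rightarrow> complex \<times> complex \<times> complex) \<Rightarrow> bool" where
  "double_point_graph_connected L \<longleftrightarrow>
     (\<forall>i j. (i, j) \<in> {(u, v). double_point_edge L u v}\<^sup>*)"

(* Cone: hyperplanes indexed by 'l option; None is H_0 = {z0 = 0}, Some i is the
   homogenization a*x + b*y + c*z0 = 0 of line i. Normal vectors in coordinates (z0, x, y). *)
definition cone_normal :: "('l \<Rightarrow> complex \<times> complex \<times> complex) \<Rightarrow> 'l option \<Rightarrow> complex \<times> complex \<times> complex" where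
  "cone_normal L h = (case h of None \<Rightarrow> (1, 0, 0) | Some i \<Rightarrow> (case L i of (a, b, c) \<Rightarrow> (c, a, b)))"

definition det3 :: "complex \<times> complex \<times> complex \<Rightarrow> complex \<times> complex \<times> complex \<Rightarrow> complex \<times> complex \<times> complex \<Rightarrow> complex" where
  "det3 u v w = (case u of (u1, u2, u3) \<Rightarrow> case v of (v1, v2, v3) \<Rightarrow> case w of (w1, w2, w3) \<Rightarrow>
      u1 * (v2 * w3 - v3 * w2) - u2 * (v1 * w3 - v3 * w1) + u3 * (v1 * w2 - v2 * w1))"

definition dep_triples :: "('l \<Rightarrow> complex \<times> complex \<times> complex) \<Rightarrow> ('l option \<times> 'l option \<times> 'l option) set" where
  "dep_triples L = {(i, j, k). i \<noteq> j \<and> i \<noteq> k \<and> j \<noteq> k \<and>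
       det3 (cone_normal L i) (cone_normal L j) (cone_normal L k) = 0}"

(* A^1 = functions 'h => complex (coordinates w.r.t. e_h).
   Degree-2 part of the exterior algebra E^2 represented by alternating coefficient
   functions; wedge product u \<and> v. *)
definition wedge :: "('h \<Rightarrow> complex) \<Rightarrow> ('h \<Rightarrow> complex) \<Rightarrow> 'h \<Rightarrow> 'h \<Rightarrow> complex" where
  "wedge u v = (\<lambda>p q. u p * v q - u q * v p)"

definition basis_vec :: "'h \<Rightarrow> 'h \<Rightarrow> complex" where
  "basis_vec i = (\<lambda>h. if h = i then 1 else 0)"

definition bdry3 :: "'h \<Rightarrow> 'h \<Rightarrow> 'h \<Rightarrow> 'h \<Rightarrow> 'h \<Rightarrow> complex" where
  "bdry3 i j k = (\<lambda>p q. wedge (basis_vec j) (basis_vec k) p q - wedge (basis_vec i) (basis_vec k) p q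
                        + wedge (basis_vec i) (basis_vec j) p q)"

(* degree-2 part I^2 of the Orlik-Solomon ideal of the cone (distinct hyperplanes, rank 3):
   the span of boundaries of dependent triples *)
definition OS_ideal2 :: "('l \<Rightarrow> complex \<times> complex \<times> complex) \<Rightarrow> ('l option \<Rightarrow> 'l option \<Rightarrow> complex) set" where
  "OS_ideal2 L = {\<omega>. \<exists>c. \<omega> = (\<lambda>p q. \<Sum>t\<in>dep_triples L. c t * (case t of (i, j, k) \<Rightarrow> bdry3 i j k p q))}"

(* H^1(A, a\<and>) = ker(a\<and> : A^1 \<rightarrow> A^2) / im(a\<and> : A^0 \<rightarrow> A^1), A^0 = C, A^2 = E^2 / I^2 *)
definition H1_nonzero :: "('l::finite \<Rightarrow> complex \<times> complex \<times> complex) \<Rightarrow> ('l option \<Rightarrow> complex) \<Rightarrow> bool" where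
  "H1_nonzero L a \<longleftrightarrow>
     (\<exists>b. wedge a b \<in> OS_ideal2 L \<and> (\<forall>z::complex. b \<noteq> (\<lambda>h. z * a h)))"

definition resonance1 :: "('l::finite \<Rightarrow> complex \<times> complex \<times> complex) \<Rightarrow> ('l option \<Rightarrow> complex) set" where
  "resonance1 L = {a. H1_nonzero L a}"

definition csubspace :: "('h \<Rightarrow> complex) set \<Rightarrow> bool" where
  "csubspace V \<longleftrightarrow> (\<lambda>_. 0) \<in> V \<and> (\<forall>u\<in>V. \<forall>v\<in>V. (\<lambda>h. u h + v h) \<in> V) \<and>
                     (\<forall>z::complex. \<forall>u\<in>V. (\<lambda>h. z * u h) \<in> V)"

(* components of R^1 (a finite union of linear subspaces): the maximal linear subspaces in it *)
definition resonance_component :: "('l::finite \<Rightarrow> complex \<times> complex \<times> complex) \<Rightarrow> ('l option \<Rightarrow> complex) set \<Rightarrow> bool" where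
  "resonance_component L V \<longleftrightarrow> csubspace V \<and> V \<subseteq> resonance1 L \<and>
     (\<forall>W. csubspace W \<and> V \<subseteq> W \<and> W \<subseteq> resonance1 L \<longrightarrow> W = V)"

definition global_component :: "('h \<Rightarrow> complex) set \<Rightarrow> bool" where
  "global_component V \<longleftrightarrow> \<not> (\<exists>h. V \<subseteq> {a. a h = 0})"

end

theory Submission
  imports Defs
begin

text \<open>
  A global component contains a vector \<open>a\<close> with all coordinates nonzero. If \<open>a \<and> b\<close> lies
  in the Orlik-Solomon ideal, then \<open>a \<and> b\<close> vanishes at every pair of lines meeting in a double
  point, since no dependent triple contains such a pair; along the connected graph \<open>\<Gamma>\<close> this
  forces \<open>b = \<lambda> a\<close> on all affine lines. The coordinate at \<open>H\<^sub>0\<close> is then controlled by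
  the flat \<open>H\<^sub>0 \<inter> H\<^sub>i\<close>, consisting of \<open>H\<^sub>0\<close> and the lines parallel to \<open>\<ell>\<^sub>i\<close>: every
  dependent triple through \<open>H\<^sub>i\<close> and another member of the flat lies in the flat, so row sums
  of elements of the ideal over it vanish, which gives \<open>b(H\<^sub>0) = \<lambda> a(H\<^sub>0)\<close>. Hence \<open>b\<close> is a
  multiple of \<open>a\<close> and \<open>H\<^sup>1(A, a \<and>) = 0\<close>.
\<close>

lemma det3_swap_12: "det3 u v w = - det3 v u w"
  by (cases u; cases v; cases w) (simp add: det3_def algebra_simps)

lemma det3_swap_23: "det3 u v w = - det3 u w v"
  by (cases u; cases v; cases w) (simp add: det3_def algebra_simps)

lemma det3_eq_0_permute:
  assumes "det3 u v w = 0"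
  shows "det3 v u w = 0" "det3 u w v = 0" "det3 w v u = 0" "det3 v w u = 0" "det3 w u v = 0"
  using assms det3_swap_12[of u v w] det3_swap_23[of u v w] det3_swap_12[of v w u]
    det3_swap_23[of v u w] det3_swap_12[of u w v] det3_swap_23[of w u v] by auto

lemma dependent_triple_third:
  assumes "x \<noteq> y" "x \<noteq> z" "y \<noteq> z" "det3 (f x) (f y) (f z) = 0"
    and "p \<in> {x, y, z}" "q \<in> {x, y, z}" "p \<noteq> q"
  obtains r where "{x, y, z} = {p, q, r}" "r \<noteq> p" "r \<noteq> q" "det3 (f p) (f q) (f r) = 0"
  using assms det3_eq_0_permute[OF assms(4)] by (auto; metis insert_commute)

lemma proportional_lines_through_point_eq:
  fixes a1 b1 c1 a2 b2 c2 x y :: complex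
  assumes "(a1, b1) \<noteq> (0, 0)" "(a2, b2) \<noteq> (0, 0)" "a1 * b2 = a2 * b1"
    and "a1 * x + b1 * y + c1 = 0" "a2 * x + b2 * y + c2 = 0"
  shows "{(u, v). a1 * u + b1 * v + c1 = 0} = {(u, v). a2 * u + b2 * v + c2 = 0}"
proof -
  obtain s where s: "s \<noteq> 0" "a2 = s * a1" "b2 = s * b1"
  proof (cases "a1 = 0")
    case True
    then have "b1 \<noteq> 0" "a2 = 0"
      using assms(1,3) by auto
    then show thesis
      using assms(2) that[of "b2 / b1"] True by auto
  next
    case False
    then have "b2 = a2 / a1 * b1"
      using assms(3) by (simp add: field_simps)
    then show thesis
      using assms(2) False that[of "a2 / a1"] by auto
  qed
  have "c2 = s * c1"
    using assms(4,5) s(2,3) by (simp add: algebra_simps) algebra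
  then have "a2 * u + b2 * v + c2 = s * (a1 * u + b1 * v + c1)" for u v
    using s by (simp add: algebra_simps)
  then show ?thesis
    using s(1) by auto
qed

lemma nonparallel_lines_meet:
  fixes a1 b1 c1 a2 b2 c2 :: complex
  assumes "a1 * b2 - a2 * b1 \<noteq> 0"
  shows "\<exists>x y. a1 * x + b1 * y + c1 = 0 \<and> a2 * x + b2 * y + c2 = 0"
proof -
  define D where "D = a1 * b2 - a2 * b1"
  have D: "D \<noteq> 0"
    using assms by (simp add: D_def)
  have "a1 * ((b1 * c2 - b2 * c1) / D) + b1 * ((c1 * a2 - c2 * a1) / D) + c1 = 0"
    "a2 * ((b1 * c2 - b2 * c1) / D) + b2 * ((c1 * a2 - c2 * a1) / D) + c2 = 0"
    using D by (simp_all add: divide_simps D_def) (simp_all add: algebra_simps)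
  then show ?thesis
    by blast
qed

lemma det3_homogenized_at_common_point:
  fixes a1 b1 c1 a2 b2 c2 a3 b3 c3 x y :: complex
  assumes "a1 * x + b1 * y + c1 = 0" "a2 * x + b2 * y + c2 = 0"
  shows "det3 (c1, a1, b1) (c2, a2, b2) (c3, a3, b3) = (a1 * b2 - a2 * b1) * (a3 * x + b3 * y + c3)"
  using assms unfolding det3_def by simp algebra

definition coef_x :: "('l \<Rightarrow> complex \<times> complex \<times> complex) \<Rightarrow> 'l \<Rightarrow> complex" where
  "coef_x L i = fst (L i)"

definition coef_y :: "('l \<Rightarrow> complex \<times> complex \<times> complex) \<Rightarrow> 'l \<Rightarrow> complex" where
  "coef_y L i = fst (snd (L i))"

definition coef_0 :: "('l \<Rightarrow> complex \<times> complex \<times> complex) \<Rightarrow> 'l \<Rightarrow> complex" where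
  "coef_0 L i = snd (snd (L i))"

definition parallel :: "('l \<Rightarrow> complex \<times> complex \<times> complex) \<Rightarrow> 'l \<Rightarrow> 'l \<Rightarrow> bool" where
  "parallel L i j \<longleftrightarrow> coef_x L i * coef_y L j = coef_x L j * coef_y L i"

lemma line_pts_coef: "line_pts L i = {(u, v). coef_x L i * u + coef_y L i * v + coef_0 L i = 0}"
  by (simp add: line_pts_def coef_x_def coef_y_def coef_0_def split: prod.split)

lemma cone_normal_Some: "cone_normal L (Some i) = (coef_0 L i, coef_x L i, coef_y L i)"
  by (simp add: cone_normal_def coef_x_def coef_y_def coef_0_def split: prod.split)

lemma det3_cone_infinity:
  "det3 (cone_normal L None) (cone_normal L (Some i)) (cone_normal L (Some k)) = 0
     \<longleftrightarrow> parallel L i k"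
  by (simp add: cone_normal_Some det3_def parallel_def cone_normal_def[of L None] mult.commute)

lemma affine_line_arrangement_coef_nonzero:
  "affine_line_arrangement L \<Longrightarrow> (coef_x L i, coef_y L i) \<noteq> (0, 0)"
  by (auto simp: affine_line_arrangement_def coef_x_def coef_y_def split: prod.splits)
    (metis prod.collapse)+

lemma parallel_common_point_eq:
  assumes arr: "affine_line_arrangement L" and par: "parallel L i j"
    and "(x, y) \<in> line_pts L i" "(x, y) \<in> line_pts L j"
  shows "i = j"
proof -
  have "line_pts L i = line_pts L j"
    unfolding line_pts_coef
    by (rule proportional_lines_through_point_eq[OF affine_line_arrangement_coef_nonzero[OF arr]
          affine_line_arrangement_coef_nonzero[OF arr]])
      (use assms(3,4) par in \<open>auto simp: line_pts_coef parallel_def\<close>)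
  then show ?thesis
    using arr by (auto simp: affine_line_arrangement_def inj_def)
qed

lemma double_point_edge_not_parallel:
  assumes arr: "affine_line_arrangement L" and "double_point_edge L i j"
  shows "\<not> parallel L i j"
  using assms parallel_common_point_eq[OF arr] unfolding double_point_edge_def
  by (metis IntD1 IntD2 insertI1 surj_pair)

lemma double_point_edge_independent:
  assumes arr: "affine_line_arrangement L" and e: "double_point_edge L i j"
    and r: "r \<noteq> Some i" "r \<noteq> Some j"
  shows "det3 (cone_normal L (Some i)) (cone_normal L (Some j)) (cone_normal L r) \<noteq> 0"
proof (cases r)
  case None
  then show ?thesis
    using double_point_edge_not_parallel[OF assms(1,2)] det3_cone_infinity[of L i j]
      det3_eq_0_permute(5) by blast
next
  case (Some k)
  from e obtain x y where p: "line_pts L i \<inter> line_pts L j = {(x, y)}"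
    and others: "\<forall>k. k \<noteq> i \<longrightarrow> k \<noteq> j \<longrightarrow> (x, y) \<notin> line_pts L k"
    unfolding double_point_edge_def by auto
  have i: "coef_x L i * x + coef_y L i * y + coef_0 L i = 0"
    and j: "coef_x L j * x + coef_y L j * y + coef_0 L j = 0"
    and "coef_x L k * x + coef_y L k * y + coef_0 L k \<noteq> 0"
    using p others r Some by (auto simp: line_pts_coef)
  then show ?thesis
    using double_point_edge_not_parallel[OF arr e] Some
      det3_homogenized_at_common_point[OF i j, of "coef_0 L k" "coef_x L k" "coef_y L k"]
    by (simp add: cone_normal_Some parallel_def)
qed

lemma dependent_with_parallel_pair_parallel:
  assumes arr: "affine_line_arrangement L" and "i \<noteq> j" "parallel L i j"
    and dep: "det3 (cone_normal L (Some i)) (cone_normal L (Some j)) (cone_normal L (Some k)) = 0"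
  shows "parallel L i k"
proof (rule ccontr)
  assume nonpar: "\<not> parallel L i k"
  then obtain x y where i: "coef_x L i * x + coef_y L i * y + coef_0 L i = 0"
    and k: "coef_x L k * x + coef_y L k * y + coef_0 L k = 0"
    using nonparallel_lines_meet[of "coef_x L i" "coef_y L k" "coef_x L k" "coef_y L i"]
    by (auto simp: parallel_def) blast
  have "coef_x L j * x + coef_y L j * y + coef_0 L j = 0"
    using det3_eq_0_permute(2)[OF dep] nonpar
      det3_homogenized_at_common_point[OF i k, of "coef_0 L j" "coef_x L j" "coef_y L j"]
    by (simp add: cone_normal_Some parallel_def)
  then show False
    using parallel_common_point_eq[OF arr assms(3), of x y] i \<open>i \<noteq> j\<close>
    by (simp add: line_pts_coef)
qed

text \<open>The hyperplanes of the cone containing the codimension-two flat \<open>H\<^sub>0 \<inter> H\<^sub>i\<close>.\<close>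

definition parallel_class :: "('l \<Rightarrow> complex \<times> complex \<times> complex) \<Rightarrow> 'l \<Rightarrow> 'l option set" where
  "parallel_class L i = insert None (Some ` {k. parallel L i k})"

lemma dependent_triple_subset_parallel_class:
  assumes arr: "affine_line_arrangement L" and t: "(x, y, z) \<in> dep_triples L"
    and "Some i \<in> {x, y, z}" "q \<in> {x, y, z}" "q \<noteq> Some i" and q: "q \<in> parallel_class L i"
  shows "{x, y, z} \<subseteq> parallel_class L i"
proof -
  obtain r where r: "{x, y, z} = {Some i, q, r}" "r \<noteq> Some i" "r \<noteq> q"
    and dep: "det3 (cone_normal L (Some i)) (cone_normal L q) (cone_normal L r) = 0"
    using dependent_triple_third[of x y z "cone_normal L" "Some i" q] assms(2-5)
    by (auto simp: dep_triples_def)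
  have "r \<in> parallel_class L i"
  proof (cases q)
    case None
    then obtain k where "r = Some k"
      using r(3) by (cases r) auto
    then show ?thesis
      using det3_eq_0_permute(1)[OF dep] None det3_cone_infinity[of L i k]
      by (simp add: parallel_class_def)
  next
    case (Some j)
    then have "parallel L i j" "i \<noteq> j"
      using q \<open>q \<noteq> Some i\<close> by (auto simp: parallel_class_def)
    then show ?thesis
      using dependent_with_parallel_pair_parallel[OF arr] dep Some
      by (cases r) (auto simp: parallel_class_def)
  qed
  moreover have "Some i \<in> parallel_class L i"
    by (simp add: parallel_class_def parallel_def)
  ultimately show ?thesis
    using r(1) q by auto
qed

lemma double_point_edge_not_in_dependent_triple:
  assumes arr: "affine_line_arrangement L" and e: "double_point_edge L i j"
    and t: "(x, y, z) \<in> dep_triples L"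
  shows "Some i \<notin> {x, y, z} \<or> Some j \<notin> {x, y, z}"
proof (rule ccontr)
  assume "\<not> (Some i \<notin> {x, y, z} \<or> Some j \<notin> {x, y, z})"
  moreover have "i \<noteq> j"
    using e by (simp add: double_point_edge_def)
  ultimately obtain r where "r \<noteq> Some i" "r \<noteq> Some j"
    "det3 (cone_normal L (Some i)) (cone_normal L (Some j)) (cone_normal L r) = 0"
    using dependent_triple_third[of x y z "cone_normal L" "Some i" "Some j"] t
    by (auto simp: dep_triples_def)
  then show False
    using double_point_edge_independent[OF arr e] by blast
qed

lemma bdry3_support:
  assumes "bdry3 x y z p q \<noteq> 0"
  shows "p \<in> {x, y, z}" "q \<in> {x, y, z}" "p \<noteq> q"
  using assms by (auto simp: bdry3_def wedge_def basis_vec_def split: if_splits)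

lemma bdry3_row_sum:
  assumes "x \<noteq> y" "x \<noteq> z" "y \<noteq> z" "finite Q" "{x, y, z} \<subseteq> Q"
  shows "(\<Sum>q\<in>Q. bdry3 x y z p q) = 0"
proof -
  have "bdry3 x y z p q = 0" if "q \<notin> {x, y, z}" for q
    using bdry3_support(2)[of x y z p q] that by blast
  then have "(\<Sum>q\<in>Q. bdry3 x y z p q) = (\<Sum>q\<in>{x, y, z}. bdry3 x y z p q)"
    using sum.mono_neutral_right[OF assms(4,5)] by blast
  also have "\<dots> = 0"
    using assms(1-3) by (auto simp: bdry3_def wedge_def basis_vec_def)
  finally show ?thesis .
qed

lemma OS_ideal2_row_sum_eq_0:
  assumes "\<omega> \<in> OS_ideal2 L"
    and "\<And>x y z. (x, y, z) \<in> dep_triples L \<Longrightarrow> (\<Sum>q\<in>Q. bdry3 x y z p q) = 0"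
  shows "(\<Sum>q\<in>Q. \<omega> p q) = 0"
proof -
  obtain c where c: "\<omega> = (\<lambda>p q. \<Sum>t\<in>dep_triples L. c t * (case t of (x, y, z) \<Rightarrow> bdry3 x y z p q))"
    using assms(1) unfolding OS_ideal2_def by blast
  have "(\<Sum>q\<in>Q. \<omega> p q)
      = (\<Sum>t\<in>dep_triples L. c t * (\<Sum>q\<in>Q. case t of (x, y, z) \<Rightarrow> bdry3 x y z p q))"
    unfolding c by (simp add: sum.swap[of _ Q] sum_distrib_left)
  also have "\<dots> = 0"
    using assms(2) by (intro sum.neutral) (auto split: prod.split)
  finally show ?thesis .
qed

lemma OS_ideal2_double_point_eq_0:
  assumes arr: "affine_line_arrangement L" and e: "double_point_edge L i j"
    and "\<omega> \<in> OS_ideal2 L"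
  shows "\<omega> (Some i) (Some j) = 0"
proof -
  have "bdry3 x y z (Some i) (Some j) = 0" if "(x, y, z) \<in> dep_triples L" for x y z
    using double_point_edge_not_in_dependent_triple[OF arr e that]
      bdry3_support(1,2)[of x y z "Some i" "Some j"] by argo
  then have "(\<Sum>q\<in>{Some j}. \<omega> (Some i) q) = 0"
    by (intro OS_ideal2_row_sum_eq_0[OF assms(3)]) simp
  then show ?thesis
    by simp
qed

lemma OS_ideal2_parallel_class_row_sum:
  fixes L :: "'l::finite \<Rightarrow> complex \<times> complex \<times> complex"
  assumes arr: "affine_line_arrangement L" and "\<omega> \<in> OS_ideal2 L"
  shows "(\<Sum>q\<in>parallel_class L i. \<omega> (Some i) q) = 0"
proof (rule OS_ideal2_row_sum_eq_0[OF assms(2)])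
  fix x y z
  assume t: "(x, y, z) \<in> dep_triples L"
  then have distinct: "x \<noteq> y" "x \<noteq> z" "y \<noteq> z"
    by (auto simp: dep_triples_def)
  show "(\<Sum>q\<in>parallel_class L i. bdry3 x y z (Some i) q) = 0"
  proof (cases "{x, y, z} \<subseteq> parallel_class L i")
    case True
    then show ?thesis
      using bdry3_row_sum[OF distinct] by simp
  next
    case False
    have "bdry3 x y z (Some i) q = 0" if "q \<in> parallel_class L i" for q
    proof (rule ccontr)
      assume "bdry3 x y z (Some i) q \<noteq> 0"
      note support = bdry3_support[OF this]
      show False
        using dependent_triple_subset_parallel_class[OF arr t support(1,2) support(3)[symmetric] that]
          False by blast
    qed
    then show ?thesis
      by simp
  qed
qed

lemma proportional_along_double_point_graph:
  assumes "double_point_graph_connected L"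
    and edge: "\<And>i j. double_point_edge L i j \<Longrightarrow> wedge a b (Some i) (Some j) = 0"
    and a: "\<And>i. a (Some i) \<noteq> 0"
  shows "b (Some j) = b (Some i) / a (Some i) * a (Some j)"
proof -
  have "(i, j) \<in> {(u, v). double_point_edge L u v}\<^sup>*"
    using assms(1) by (simp add: double_point_graph_connected_def)
  then show ?thesis
  proof (induction rule: rtrancl_induct)
    case base
    then show ?case
      using a by simp
  next
    case (step k l)
    then have "a (Some k) * b (Some l) = a (Some k) * (b (Some i) / a (Some i) * a (Some l))"
      using edge[of k l] by (simp add: wedge_def algebra_simps)
    then show ?case
      using a[of k] mult_left_cancel by blast
  qed
qed

lemma H1_zero_if_nowhere_zero:
  fixes L :: "'l::finite \<Rightarrow> complex \<times> complex \<times> complex"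
  assumes arr: "affine_line_arrangement L" and conn: "double_point_graph_connected L"
    and a: "\<And>h. a h \<noteq> 0"
  shows "\<not> H1_nonzero L a"
proof
  assume "H1_nonzero L a"
  then obtain b where w: "wedge a b \<in> OS_ideal2 L" and nb: "\<forall>z. b \<noteq> (\<lambda>h. z * a h)"
    by (auto simp: H1_nonzero_def)
  fix i :: 'l
  define r where "r = b (Some i) / a (Some i)"
  have lines: "b (Some j) = r * a (Some j)" for j
    unfolding r_def
    by (rule proportional_along_double_point_graph[OF conn OS_ideal2_double_point_eq_0[OF arr _ w] a])
  have "wedge a b (Some i) q = (if q = None then a (Some i) * (b None - r * a None) else 0)" for q
    by (cases q) (simp_all add: wedge_def lines algebra_simps)
  then have "(\<Sum>q\<in>parallel_class L i. wedge a b (Some i) q) = a (Some i) * (b None - r * a None)"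
    by (simp add: parallel_class_def)
  then have "b None = r * a None"
    using OS_ideal2_parallel_class_row_sum[OF arr w] a by simp
  then have "b = (\<lambda>h. r * a h)"
    using lines by (intro ext) (case_tac h; simp)
  then show False
    using nb by blast
qed

lemma csubspace_obtain_nowhere_zero:
  fixes V :: "('h \<Rightarrow> complex) set"
  assumes V: "csubspace V" and nonzero: "\<And>h. \<exists>u\<in>V. u h \<noteq> 0" and "finite F"
  shows "\<exists>u\<in>V. \<forall>h\<in>F. u h \<noteq> 0"
  using \<open>finite F\<close>
proof (induction F rule: finite_induct)
  case empty
  then show ?case
    using V by (auto simp: csubspace_def)
next
  case (insert h F)
  obtain u where u: "u \<in> V" "\<forall>k\<in>F. u k \<noteq> 0"
    using insert.IH by blast
  obtain v where v: "v \<in> V" "v h \<noteq> 0"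
    using nonzero by blast
  \<comment> \<open>avoid the finitely many \<open>z\<close> for which \<open>u + z v\<close> acquires a zero on \<open>insert h F\<close>\<close>
  have "finite ((\<lambda>k. - u k / v k) ` insert h F)"
    using insert.hyps(1) by simp
  then obtain z where z: "z \<notin> (\<lambda>k. - u k / v k) ` insert h F"
    using ex_new_if_finite[OF infinite_UNIV_char_0] by blast
  have "(\<lambda>k. z * v k) \<in> V"
    using V v(1) unfolding csubspace_def by blast
  then have "(\<lambda>k. u k + z * v k) \<in> V"
    using V u(1) unfolding csubspace_def by fastforce
  moreover have "\<forall>k\<in>insert h F. u k + z * v k \<noteq> 0"
  proof
    fix k
    assume k: "k \<in> insert h F"
    show "u k + z * v k \<noteq> 0"
    proof (cases "v k = 0")
      case True
      then show ?thesis
        using k u(2) v(2) by auto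
    next
      case False
      have "z \<noteq> - u k / v k"
        using z k by blast
      then show ?thesis
        using False by (simp add: field_simps add_eq_0_iff)
    qed
  qed
  ultimately show ?case
    by (intro bexI[of _ "\<lambda>k. u k + z * v k"]) simp_all
qed

theorem corollary3p2:
  fixes L :: "'l::finite \<Rightarrow> complex \<times> complex \<times> complex"
  assumes "affine_line_arrangement L"
    and "double_point_graph_connected L"
  shows "\<not> (\<exists>V. resonance_component L V \<and> global_component V)"
proof
  assume "\<exists>V. resonance_component L V \<and> global_component V"
  then obtain V where V: "csubspace V" "V \<subseteq> resonance1 L" "global_component V"
    by (auto simp: resonance_component_def)
  then have "\<exists>u\<in>V. u h \<noteq> 0" for h
    by (auto simp: global_component_def)
  then obtain a where "a \<in> resonance1 L" "\<forall>h. a h \<noteq> 0"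
    using csubspace_obtain_nowhere_zero[OF V(1), of UNIV] V(2) by auto
  then show False
    using H1_zero_if_nowhere_zero[OF assms] by (simp add: resonance1_def)
qed

end
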